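(* Let $n\geq 2$, $p\geq n+2$, and $$\Omega=\{(x',x_n)\in\mathbb R^{n-1}\times\mathbb R: |x'|<1,\ 0<x_n<\sqrt{1-|x'|^2}\}.$$ Then there is a constant $C>0$ depending only on $n,p$ such that the function $$w(x',x_n)=Cx_n-Cx_n^{\frac{2}{n+p}}(1-|x'|^2)^{\frac{n+p-2}{2(n+p)}}$$ is smooth and convex in $\Omega$ and satisfies $\det D^2 w\leq |w|^{-p}$ in $\Omega$ and $w=0$ on $\partial\Omega$. *)

theory Defs
  imports "HOL-Analysis.Analysis"
begin

text \<open>Points of R^n are vectors x :: real^'n; a distinguished coordinate k plays
  the role of x_n, and the remaining coordinates form x'.\<close>

definition xprime_sq :: "'n::finite \<Rightarrow> real^'n \<Rightarrow> real" where
  "xprime_sq k x = (\<Sum>i\<in>UNIV - {k}. (x $ i)^2)"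

definition Omega_dom :: "'n::finite \<Rightarrow> (real^'n) set" where
  "Omega_dom k = {x. xprime_sq k x < 1 \<and> 0 < x $ k \<and> x $ k < sqrt (1 - xprime_sq k x)}"

definition w_fun :: "real \<Rightarrow> real \<Rightarrow> 'n::finite \<Rightarrow> real^'n \<Rightarrow> real" where
  "w_fun C p k x = C * x $ k
     - C * (x $ k) powr (2 / (real CARD('n) + p))
         * (1 - xprime_sq k x) powr ((real CARD('n) + p - 2) / (2 * (real CARD('n) + p)))"

definition pderiv_dir :: "('a::euclidean_space \<Rightarrow> real) \<Rightarrow> 'a \<Rightarrow> 'a \<Rightarrow> real" where
  "pderiv_dir f e x = frechet_derivative f (at x) e"

fun Ck_on :: "nat \<Rightarrow> 'a::euclidean_space set \<Rightarrow> ('a \<Rightarrow> real) \<Rightarrow> bool" where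
  "Ck_on 0 S f = continuous_on S f"
| "Ck_on (Suc k) S f = (continuous_on S f \<and> f differentiable_on S \<and>
      (\<forall>e\<in>Basis. Ck_on k S (pderiv_dir f e)))"

definition smooth_on :: "'a::euclidean_space set \<Rightarrow> ('a \<Rightarrow> real) \<Rightarrow> bool" where
  "smooth_on S f = (\<forall>k. Ck_on k S f)"

definition hessian :: "(real^'n \<Rightarrow> real) \<Rightarrow> real^'n \<Rightarrow> real^'n^'n" where
  "hessian f x = (\<chi> i j. pderiv_dir (pderiv_dir f (axis j 1)) (axis i 1) x)"

end

theory Submission
  imports Defs
begin

text \<open>Write t = x_n, g = 1 - |x'|^2 and \<phi> = t^a g^b with a = 2/(n+p) and
  b = (n+p-2)/(2(n+p)), so that a + 2b = 1 and w = C (t - \<phi>).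
  On the boundary either t = 0 or g = t^2, and in both cases \<phi> = t, so w = 0.
  The function (T, S) \<mapsto> T^a S^b is concave for a + b \<le> 1 (weighted AM-GM after
  normalising at the convex combination) and nondecreasing in S, while g is concave;
  hence \<phi> is concave and w is convex.
  The Hessian of w is a bordered matrix whose lower block is a multiple of the identity
  plus a rank-one term; the matrix determinant lemma and g + |x'|^2 = 1 give
  det D^2 w = a (2Cb\<phi>/g)^n / t^2. Since (C\<phi>)^(n+p) \<le> t^2 g^((n+p-2)/2) \<le> t^2 g^n
  for C \<le> 1 and p \<ge> n + 2, this is at most (C\<phi>)^(-p) \<le> |w|^(-p); we take C = 1.
  Smoothness holds because w is built from constants and coordinates by sums, products
  and real powers of positive functions.\<close>

section \<open>The domain\<close>

lemma norm_sq_eq_xprime_sq: "norm x ^ 2 = (x$k)^2 + xprime_sq k x"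
  unfolding power2_norm_eq_inner inner_vec_def xprime_sq_def
  by (simp add: sum.remove[of UNIV k] power2_eq_square)

lemma xprime_sq_nonneg: "0 \<le> xprime_sq k x"
  unfolding xprime_sq_def by (intro sum_nonneg) auto

lemma Omega_dom_eq: "Omega_dom k = {x. 0 < x$k} \<inter> ball 0 1"
proof -
  have "x \<in> Omega_dom k \<longleftrightarrow> 0 < x$k \<and> (x$k)^2 + xprime_sq k x < 1" for x
  proof -
    have "0 < x$k \<Longrightarrow> x$k < sqrt (1 - xprime_sq k x) \<longleftrightarrow> (x$k)^2 < 1 - xprime_sq k x"
      by (metis abs_of_pos real_sqrt_abs real_sqrt_less_iff)
    then show ?thesis
      unfolding Omega_dom_def using xprime_sq_nonneg[of k x] zero_le_power2[of "x$k"]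
      by (smt (verit) mem_Collect_eq)
  qed
  moreover have "norm x < 1 \<longleftrightarrow> (x$k)^2 + xprime_sq k x < 1" for x :: "real^'a"
    by (metis abs_norm_cancel abs_square_less_1 norm_sq_eq_xprime_sq)
  ultimately show ?thesis by auto
qed

lemma open_Omega_dom: "open (Omega_dom k)"
  unfolding Omega_dom_eq by (intro open_Int open_halfspace_component_gt_cart open_ball)

lemma convex_Omega_dom: "convex (Omega_dom k)"
proof -
  have "convex {x::real^'a. 0 < x$k}"
    unfolding convex_def by (auto intro: add_pos_nonneg add_nonneg_pos simp: less_eq_real_def)
  then show ?thesis unfolding Omega_dom_eq by (intro convex_Int convex_ball)
qed

lemma closure_Omega_dom_subset: "closure (Omega_dom k) \<subseteq> {x. 0 \<le> x$k} \<inter> cball 0 1"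
  unfolding Omega_dom_eq
  by (intro closure_minimal closed_Int closed_halfspace_component_ge_cart closed_cball) auto

definition g_fun :: "'n::finite \<Rightarrow> real^'n \<Rightarrow> real" where
  "g_fun k x = 1 - xprime_sq k x"

definition phi_fun :: "real \<Rightarrow> real \<Rightarrow> 'n::finite \<Rightarrow> real^'n \<Rightarrow> real" where
  "phi_fun a b k x = (x$k) powr a * g_fun k x powr b"

lemma Omega_domD:
  assumes "x \<in> Omega_dom k"
  shows "0 < x$k" "(x$k)^2 < g_fun k x" "0 < g_fun k x"
proof -
  show "0 < x$k" "(x$k)^2 < g_fun k x"
    using assms norm_sq_eq_xprime_sq[of x k] abs_square_less_1[of "norm x"]
    by (auto simp: Omega_dom_eq g_fun_def)
  then show "0 < g_fun k x"
    by (smt (verit) zero_le_power2)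
qed

lemma w_fun_eq_phi_fun:
  "w_fun C p k = (\<lambda>x. C * x$k - C * phi_fun (2 / (real CARD('n) + p))
      ((real CARD('n) + p - 2) / (2 * (real CARD('n) + p))) k x)"
  for k :: "'n::finite"
  by (simp add: fun_eq_iff w_fun_def phi_fun_def g_fun_def)

lemma w_fun_exponents:
  fixes k :: "'n::finite"
  assumes "2 < real CARD('n) + p"
  obtains a b where "0 < a" "0 < b" "a + 2 * b = 1" "a * (real CARD('n) + p) = 2"
    and "w_fun C p k = (\<lambda>x. C * x$k - C * phi_fun a b k x)"
proof -
  define s where "s = real CARD('n) + p"
  have "2 < s" using assms by (simp add: s_def)
  show thesis
  proof (rule that[of "2 / s" "(s - 2) / (2 * s)"])
    show "w_fun C p k = (\<lambda>x. C * x$k - C * phi_fun (2 / s) ((s - 2) / (2 * s)) k x)"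
      unfolding s_def by (rule w_fun_eq_phi_fun)
  qed (use \<open>2 < s\<close> in \<open>simp_all add: field_simps\<close>, simp add: s_def)
qed

section \<open>Smoothness of elementary functions\<close>

inductive_set elementary_funs :: "(real^'n) set \<Rightarrow> (real^'n \<Rightarrow> real) set" for S where
  const: "(\<lambda>x. c) \<in> elementary_funs S"
| coord: "(\<lambda>x. x$i) \<in> elementary_funs S"
| add: "f \<in> elementary_funs S \<Longrightarrow> g \<in> elementary_funs S \<Longrightarrow> (\<lambda>x. f x + g x) \<in> elementary_funs S"
| mult: "f \<in> elementary_funs S \<Longrightarrow> g \<in> elementary_funs S \<Longrightarrow> (\<lambda>x. f x * g x) \<in> elementary_funs S"
| powr: "f \<in> elementary_funs S \<Longrightarrow> (\<And>x. x \<in> S \<Longrightarrow> 0 < f x) \<Longrightarrow> (\<lambda>x. f x powr r) \<in> elementary_funs S"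

lemma elementary_funs_sum:
  "finite A \<Longrightarrow> (\<And>i. i \<in> A \<Longrightarrow> f i \<in> elementary_funs S) \<Longrightarrow> (\<lambda>x. \<Sum>i\<in>A. f i x) \<in> elementary_funs S"
  by (induction A rule: finite_induct) (auto intro: elementary_funs.intros)

lemma elementary_funs_diff:
  assumes "f \<in> elementary_funs S" "g \<in> elementary_funs S"
  shows "(\<lambda>x. f x - g x) \<in> elementary_funs S"
  using elementary_funs.add[OF assms(1) elementary_funs.mult[OF elementary_funs.const[of "-1"] assms(2)]]
  by simp

definition directional_derivative_on :: "'a::real_normed_vector set \<Rightarrow> 'a \<Rightarrow> ('a \<Rightarrow> real) \<Rightarrow> ('a \<Rightarrow> real) \<Rightarrow> bool" where
  "directional_derivative_on S v f f' \<longleftrightarrow> (\<forall>x\<in>S. \<exists>D. (f has_derivative D) (at x) \<and> D v = f' x)"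

lemma directional_derivative_on_const: "directional_derivative_on S v (\<lambda>x. c) (\<lambda>x. 0)"
  unfolding directional_derivative_on_def by (auto intro: has_derivative_const)

lemma directional_derivative_on_component:
  "directional_derivative_on S v (\<lambda>x. x$i) (\<lambda>x. v$i)"
  unfolding directional_derivative_on_def by (auto intro: bounded_linear_imp_has_derivative)

lemma directional_derivative_on_add:
  assumes "directional_derivative_on S v f f'" "directional_derivative_on S v g g'"
  shows "directional_derivative_on S v (\<lambda>x. f x + g x) (\<lambda>x. f' x + g' x)"
  unfolding directional_derivative_on_def
proof
  fix x assume "x \<in> S"
  then obtain Df Dg where "(f has_derivative Df) (at x)" "Df v = f' x"
    "(g has_derivative Dg) (at x)" "Dg v = g' x"
    using assms unfolding directional_derivative_on_def by blast
  then show "\<exists>D. ((\<lambda>x. f x + g x) has_derivative D) (at x) \<and> D v = f' x + g' x"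
    by (intro exI[of _ "\<lambda>h. Df h + Dg h"] conjI has_derivative_add) auto
qed

lemma directional_derivative_on_mult:
  assumes "directional_derivative_on S v f f'" "directional_derivative_on S v g g'"
  shows "directional_derivative_on S v (\<lambda>x. f x * g x) (\<lambda>x. f x * g' x + f' x * g x)"
  unfolding directional_derivative_on_def
proof
  fix x assume "x \<in> S"
  then obtain Df Dg where "(f has_derivative Df) (at x)" "Df v = f' x"
    "(g has_derivative Dg) (at x)" "Dg v = g' x"
    using assms unfolding directional_derivative_on_def by blast
  then show "\<exists>D. ((\<lambda>x. f x * g x) has_derivative D) (at x) \<and> D v = f x * g' x + f' x * g x"
    by (intro exI[of _ "\<lambda>h. f x * Dg h + Df h * g x"] conjI has_derivative_mult) auto
qed

lemma directional_derivative_on_powr: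
  assumes "directional_derivative_on S v f f'" "\<And>x. x \<in> S \<Longrightarrow> 0 < f x"
  shows "directional_derivative_on S v (\<lambda>x. f x powr r) (\<lambda>x. r * f x powr (r - 1) * f' x)"
  unfolding directional_derivative_on_def
proof
  fix x assume "x \<in> S"
  then obtain Df where Df: "(f has_derivative Df) (at x)" "Df v = f' x" and pos: "0 < f x"
    using assms unfolding directional_derivative_on_def by blast
  have "((\<lambda>x. f x powr r) has_derivative (\<lambda>h. f x powr r * (0 * ln (f x) + Df h * r / f x))) (at x)"
    using has_derivative_powr[OF Df(1) has_derivative_const pos] by simp
  moreover have "f x powr r * (0 * ln (f x) + Df v * r / f x) = r * f x powr (r - 1) * f' x"
    using pos Df(2) by (simp add: powr_diff)
  ultimately show "\<exists>D. ((\<lambda>x. f x powr r) has_derivative D) (at x) \<and> D v = r * f x powr (r - 1) * f' x"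
    by blast
qed

lemma elementary_funs_directional_derivative_on:
  assumes "f \<in> elementary_funs S"
  shows "\<exists>f'\<in>elementary_funs S. directional_derivative_on S v f f'"
  using assms
proof induction
  case (const c)
  then show ?case using directional_derivative_on_const elementary_funs.const by blast
next
  case (coord i)
  then show ?case using directional_derivative_on_component elementary_funs.const by blast
next
  case (add f g)
  then show ?case using directional_derivative_on_add elementary_funs.add by blast
next
  case (mult f g)
  then obtain f' g' where "f' \<in> elementary_funs S" "directional_derivative_on S v f f'"
    "g' \<in> elementary_funs S" "directional_derivative_on S v g g'" by blast
  with mult.hyps show ?case
    by (intro bexI[of _ "\<lambda>x. f x * g' x + f' x * g x"] directional_derivative_on_mult)
       (auto intro: elementary_funs.intros)
next
  case (powr f r)
  then obtain f' where "f' \<in> elementary_funs S" "directional_derivative_on S v f f'" by blast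
  with powr.hyps show ?case
    by (intro bexI[of _ "\<lambda>x. r * f x powr (r - 1) * f' x"] directional_derivative_on_powr
        elementary_funs.mult elementary_funs.const elementary_funs.powr)
qed

lemma frechet_derivative_transform_within_open:
  assumes "open S" "x \<in> S" "\<And>y. y \<in> S \<Longrightarrow> f y = g y"
  shows "frechet_derivative f (at x) = frechet_derivative g (at x)"
proof -
  have "(f has_derivative D) (at x) \<longleftrightarrow> (g has_derivative D) (at x)" for D
    using assms has_derivative_transform_within_open[OF _ assms(1,2)] by metis
  then show ?thesis unfolding frechet_derivative_def by simp
qed

lemma Ck_on_cong:
  assumes "open S" "\<And>x. x \<in> S \<Longrightarrow> f x = g x"
  shows "Ck_on k S f \<longleftrightarrow> Ck_on k S g"
  using assms(2)
proof (induction k arbitrary: f g)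
  case 0
  then show ?case by (simp cong: continuous_on_cong)
next
  case (Suc k)
  have "pderiv_dir f e x = pderiv_dir g e x" if "x \<in> S" for e x
    unfolding pderiv_dir_def
    using frechet_derivative_transform_within_open[OF assms(1) that Suc.prems] by simp
  with Suc have "Ck_on k S (pderiv_dir f e) \<longleftrightarrow> Ck_on k S (pderiv_dir g e)" for e
    by blast
  moreover have "f differentiable_on S \<longleftrightarrow> g differentiable_on S"
    unfolding differentiable_on_def
    using differentiable_transform_within[OF _ zero_less_one] Suc.prems by metis
  ultimately show ?case
    using Suc.prems by (simp cong: continuous_on_cong)
qed

lemma elementary_funs_pderiv_dir:
  assumes "g \<in> elementary_funs S"
  obtains h where "h \<in> elementary_funs S"
    and "\<And>x. x \<in> S \<Longrightarrow> g differentiable at x"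
    and "\<And>x. x \<in> S \<Longrightarrow> pderiv_dir g e x = h x"
proof -
  obtain h where h: "h \<in> elementary_funs S" "\<forall>x\<in>S. \<exists>D. (g has_derivative D) (at x) \<and> D e = h x"
    using elementary_funs_directional_derivative_on[OF assms] unfolding directional_derivative_on_def by blast
  show thesis
  proof (rule that[OF h(1)])
    fix x assume "x \<in> S"
    then obtain D where "(g has_derivative D) (at x)" "D e = h x" using h(2) by blast
    then show "g differentiable at x" "pderiv_dir g e x = h x"
      unfolding pderiv_dir_def differentiable_def by (auto simp: frechet_derivative_at[symmetric])
  qed
qed

lemma Ck_on_elementary_funs:
  assumes "open S" "g \<in> elementary_funs S"
  shows "Ck_on k S g"
  using assms(2)
proof (induction k arbitrary: g)
  case 0
  then show ?case
    by (metis Ck_on.simps(1) continuous_at_imp_continuous_on differentiable_imp_continuous_within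
        elementary_funs_pderiv_dir)
next
  case (Suc k)
  have "Ck_on k S (pderiv_dir g e)" for e
  proof -
    obtain h where "h \<in> elementary_funs S" "\<And>x. x \<in> S \<Longrightarrow> pderiv_dir g e x = h x"
      using elementary_funs_pderiv_dir[OF Suc.prems] by metis
    then show ?thesis using Suc.IH Ck_on_cong[OF assms(1)] by metis
  qed
  moreover have "g differentiable at x" if "x \<in> S" for x
    using elementary_funs_pderiv_dir[OF Suc.prems] that by metis
  ultimately show ?case
    by (simp add: continuous_at_imp_continuous_on differentiable_imp_continuous_within
        differentiable_at_imp_differentiable_on)
qed

lemma phi_fun_elementary_funs: "phi_fun a b k \<in> elementary_funs (Omega_dom k)"
proof -
  have "g_fun k = (\<lambda>x. 1 - (\<Sum>i\<in>UNIV-{k}. x$i * x$i))"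
    by (simp add: fun_eq_iff g_fun_def xprime_sq_def power2_eq_square)
  then have "g_fun k \<in> elementary_funs (Omega_dom k)"
    by (auto intro!: elementary_funs.intros elementary_funs_sum elementary_funs_diff)
  then show ?thesis
    unfolding phi_fun_def by (auto intro!: elementary_funs.intros dest: Omega_domD)
qed

lemma smooth_on_w_fun: "smooth_on (Omega_dom k) (w_fun C p k)"
proof -
  have "w_fun C p k \<in> elementary_funs (Omega_dom k)"
    unfolding w_fun_eq_phi_fun
    by (intro elementary_funs.intros elementary_funs_diff phi_fun_elementary_funs)
  then show ?thesis
    unfolding smooth_on_def using Ck_on_elementary_funs[OF open_Omega_dom] by blast
qed

section \<open>Boundary values\<close>

lemma phi_fun_frontier:
  assumes ab: "a + 2 * b = 1" and x: "x \<in> frontier (Omega_dom k)"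
  shows "phi_fun a b k x = x$k"
proof -
  have "x \<in> closure (Omega_dom k)" "x \<notin> Omega_dom k"
    using x open_Omega_dom[of k] by (auto simp: frontier_def interior_open)
  then have t: "0 \<le> x$k" and "norm x \<le> 1" and "x$k = 0 \<or> norm x = 1"
    using closure_Omega_dom_subset[of k] by (auto simp: Omega_dom_eq)
  then consider "x$k = 0" | "0 < x$k" "g_fun k x = (x$k)^2"
    using norm_sq_eq_xprime_sq[of x k] by (fastforce simp: g_fun_def)
  then show ?thesis
  proof cases
    case 2
    then have "phi_fun a b k x = x$k powr (a + 2 * b)"
      by (simp add: phi_fun_def powr_add powr_powr flip: powr_numeral)
    then show ?thesis using 2 ab by simp
  qed (simp add: phi_fun_def)
qed

lemma w_fun_frontier:
  fixes k :: "'n::finite"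
  assumes "2 < real CARD('n) + p" "x \<in> frontier (Omega_dom k)"
  shows "w_fun C p k x = 0"
proof -
  obtain a b where "a + 2 * b = 1" and w: "w_fun C p k = (\<lambda>x. C * x$k - C * phi_fun a b k x)"
    using w_fun_exponents[OF assms(1)] by blast
  then show ?thesis by (simp add: w phi_fun_frontier[OF _ assms(2)])
qed

section \<open>Convexity\<close>

lemma convex_on_xprime_sq: "convex_on UNIV (xprime_sq k)"
proof -
  have sq: "convex_on UNIV (\<lambda>x::real^'n. (x$i)^2)" for i
    using convex_power2 by (simp add: convex_on_def)
  have "convex_on UNIV (\<lambda>x::real^'n. \<Sum>i\<in>A. (x$i)^2)" for A
    by (induction A rule: infinite_finite_induct) (simp_all add: convex_on_const convex_on_add sq)
  then show ?thesis unfolding xprime_sq_def[abs_def] .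
qed

lemma powr_mult_powr_le_affine:
  fixes a b X Y :: real
  assumes "0 < a" "0 < b" "a + b \<le> 1" "0 < X" "0 < Y"
  shows "X powr a * Y powr b \<le> a * X + b * Y + (1 - a - b)"
proof -
  define s where "s = a + b"
  have s: "0 < s" "s \<le> 1" using assms by (auto simp: s_def)
  have "X powr a * Y powr b = (X powr (a/s) * Y powr (b/s)) powr s"
    using s assms by (simp add: powr_mult powr_powr)
  also have "\<dots> \<le> ((a/s) * X + (b/s) * Y) powr s"
    using s assms
    by (intro powr_mono2 Youngs_inequality_0) (auto simp: s_def add_divide_distrib[symmetric])
  also have "\<dots> = ((a/s) * X + (b/s) * Y) powr s * 1 powr (1 - s)"
    by simp
  also have "\<dots> \<le> s * ((a/s) * X + (b/s) * Y) + (1 - s) * 1"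
    using s assms by (intro Youngs_inequality_0) (auto intro: add_pos_pos)
  also have "\<dots> = a * X + b * Y + (1 - a - b)"
    using s(1) by (simp add: distrib_left) (simp add: s_def)
  finally show ?thesis .
qed

lemma powr_mult_powr_concave:
  fixes a b u v X1 Y1 X2 Y2 :: real
  assumes ab: "0 < a" "0 < b" "a + b \<le> 1"
    and pos: "0 < X1" "0 < Y1" "0 < X2" "0 < Y2" and uv: "0 \<le> u" "0 \<le> v" "u + v = 1"
  shows "u * (X1 powr a * Y1 powr b) + v * (X2 powr a * Y2 powr b)
      \<le> (u * X1 + v * X2) powr a * (u * Y1 + v * Y2) powr b"
proof -
  define X Y where "X = u * X1 + v * X2" and "Y = u * Y1 + v * Y2"
  have XY: "0 < X" "0 < Y"
    using pos uv unfolding X_def Y_def by (smt (verit) mult_nonneg_nonneg mult_pos_pos)+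
  define M where "M = X powr a * Y powr b"
  \<comment> \<open>Normalising by the value at the convex combination reduces concavity to weighted AM-GM.\<close>
  have normalised: "Xi powr a * Yi powr b \<le> M * (a * (Xi / X) + b * (Yi / Y) + (1 - a - b))"
    if "0 < Xi" "0 < Yi" for Xi Yi
  proof -
    have "Xi powr a * Yi powr b = M * ((Xi / X) powr a * (Yi / Y) powr b)"
      using XY that by (simp add: M_def powr_divide)
    also have "\<dots> \<le> M * (a * (Xi / X) + b * (Yi / Y) + (1 - a - b))"
      using XY that ab by (intro mult_left_mono powr_mult_powr_le_affine) (auto simp: M_def)
    finally show ?thesis .
  qed
  have "u * (X1 powr a * Y1 powr b) + v * (X2 powr a * Y2 powr b)
      \<le> u * (M * (a * (X1 / X) + b * (Y1 / Y) + (1 - a - b)))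
        + v * (M * (a * (X2 / X) + b * (Y2 / Y) + (1 - a - b)))"
    using normalised pos uv by (intro add_mono mult_left_mono) auto
  also have "\<dots> = M * (a * ((u * X1 + v * X2) / X) + b * ((u * Y1 + v * Y2) / Y) + (u + v) * (1 - a - b))"
    using XY by (simp add: field_simps)
  also have "\<dots> = M"
    using XY uv by (simp add: X_def Y_def)
  finally show ?thesis by (simp add: M_def X_def Y_def)
qed

lemma concave_on_phi_fun:
  assumes ab: "0 < a" "0 < b" "a + b \<le> 1"
  shows "concave_on (Omega_dom k) (phi_fun a b k)"
  unfolding concave_on_iff
proof (intro conjI convex_Omega_dom ballI allI impI)
  fix x y and u v :: real
  assume x: "x \<in> Omega_dom k" and y: "y \<in> Omega_dom k" and uv: "0 \<le> u" "0 \<le> v" "u + v = 1"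
  let ?z = "u *\<^sub>R x + v *\<^sub>R y"
  have pos: "0 < x$k" "0 < g_fun k x" "0 < y$k" "0 < g_fun k y"
    using Omega_domD[OF x] Omega_domD[OF y] by auto
  have g_concave: "u * g_fun k x + v * g_fun k y \<le> g_fun k ?z"
    using convex_on_xprime_sq[of k] uv unfolding convex_on_def g_fun_def by (simp add: algebra_simps)
  have "u * phi_fun a b k x + v * phi_fun a b k y
      \<le> (u * x$k + v * y$k) powr a * (u * g_fun k x + v * g_fun k y) powr b"
    using powr_mult_powr_concave[OF ab pos(1,2,3,4) uv] by (simp add: phi_fun_def)
  also have "\<dots> \<le> (u * x$k + v * y$k) powr a * g_fun k ?z powr b"
    using g_concave pos uv ab
    by (intro mult_left_mono powr_mono2) (auto intro!: add_nonneg_nonneg)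
  finally show "u * phi_fun a b k x + v * phi_fun a b k y \<le> phi_fun a b k ?z"
    by (simp add: phi_fun_def)
qed

lemma convex_on_w_fun:
  fixes k :: "'n::finite"
  assumes "0 \<le> C" "2 < real CARD('n) + p"
  shows "convex_on (Omega_dom k) (w_fun C p k)"
proof -
  obtain a b where ab: "0 < a" "0 < b" "a + 2 * b = 1"
    and w: "w_fun C p k = (\<lambda>x. C * x$k - C * phi_fun a b k x)"
    using w_fun_exponents[OF assms(2)] by blast
  have "convex_on (Omega_dom k) (\<lambda>x. C * x$k)"
    using convex_Omega_dom by (simp add: convex_on_def algebra_simps)
  moreover have "concave_on (Omega_dom k) (\<lambda>x. C * phi_fun a b k x)"
    using ab assms(1) by (intro concave_on_cmul concave_on_phi_fun) auto
  ultimately show ?thesis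
    unfolding w by (rule convex_on_diff)
qed

section \<open>Determinants of diagonal plus rank-one matrices\<close>

lemma det_diagonal_row_replaced:
  fixes d :: "'n::finite \<Rightarrow> real" and v :: "real^'n"
  shows "det (\<chi> i. if i = m then v else axis i (d i)) = v$m * (\<Prod>j\<in>UNIV-{m}. d j)"
proof -
  have v: "v = (\<Sum>j\<in>UNIV. v$j *\<^sub>R axis j 1)"
    by (simp add: vec_eq_iff sum_component axis_def if_distrib cong: if_cong)
  have "det (\<chi> i. if i = m then v else axis i (d i))
      = (\<Sum>j\<in>UNIV. det (\<chi> i. if i = m then v$j *\<^sub>R axis j 1 else axis i (d i)))"
    by (subst v) (rule det_linear_row_sum, simp)
  also have "\<dots> = det (\<chi> i. if i = m then v$m *\<^sub>R axis m 1 else axis i (d i))"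
  proof -
    have "det (\<chi> i. if i = m then v$j *\<^sub>R axis j 1 else axis i (d i)) = 0" if "j \<noteq> m" for j
      by (rule det_zero_column[of m]) (use that in \<open>auto simp: column_def vec_eq_iff axis_def\<close>)
    then show ?thesis by (subst sum.remove[of _ m]) auto
  qed
  also have "\<dots> = (\<Prod>i\<in>UNIV. if i = m then v$m else d i)"
    by (subst det_diagonal) (auto simp: axis_def intro!: prod.cong)
  also have "\<dots> = v$m * (\<Prod>j\<in>UNIV-{m}. d j)"
    by (subst prod.remove[of _ m]) (auto intro!: prod.cong)
  finally show ?thesis .
qed

lemma det_diagonal_row_replaced_rank_one:
  fixes d w :: "'n::finite \<Rightarrow> real" and v :: "real^'n"
  assumes "m \<notin> T"
  shows "det (\<chi> i. if i = m then v else if i \<in> T then axis i (d i) + w i *\<^sub>R v else axis i (d i))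
      = v$m * (\<Prod>j\<in>UNIV-{m}. d j)"
  using finite[of T] assms
proof (induction T rule: finite_induct)
  case empty
  then show ?case using det_diagonal_row_replaced[of m v d] by (simp cong: if_cong)
next
  case (insert z T)
  let ?row = "\<lambda>i. if i = m then v else if i \<in> T then axis i (d i) + w i *\<^sub>R v else axis i (d i)"
  have zm: "z \<noteq> m" using insert by auto
  \<comment> \<open>The summand w z *s v of row z is a multiple of row m, so it contributes nothing.\<close>
  have "det (\<chi> i. if i = z then v else ?row i) = 0"
    by (rule det_identical_rows[OF zm]) (auto simp: row_def vec_eq_iff zm)
  then have "det (\<chi> i. if i = z then w z *s v else ?row i) = 0"
    using det_row_mul[of z "w z" "\<lambda>i. v" ?row] by simp
  moreover have "(\<chi> i. if i = m then v else if i \<in> insert z T then axis i (d i) + w i *\<^sub>R v else axis i (d i))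
      = (\<chi> i. if i = z then axis i (d i) + w z *s v else ?row i)"
    using zm by (auto simp: vec_eq_iff scalar_mult_eq_scaleR)
  moreover have "(\<chi> i. if i = z then axis i (d i) else ?row i) = (\<chi> i. ?row i)"
    using insert by (auto simp: vec_eq_iff)
  ultimately show ?case
    using insert det_row_add[of z "\<lambda>i. axis i (d i)" "\<lambda>i. w z *s v" ?row] by simp
qed

lemma det_diagonal_add_rank_one_rows:
  fixes d w :: "'n::finite \<Rightarrow> real" and v :: "real^'n"
  shows "det (\<chi> i. if i \<in> T then axis i (d i) + w i *\<^sub>R v else axis i (d i))
      = (\<Prod>i\<in>UNIV. d i) + (\<Sum>i\<in>T. w i * v$i * (\<Prod>j\<in>UNIV-{i}. d j))"
  using finite[of T]
proof (induction T rule: finite_induct)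
  case empty
  have "det (\<chi> i. axis i (d i)) = (\<Prod>i\<in>UNIV. d i)"
    by (subst det_diagonal) (auto simp: axis_def)
  then show ?case by simp
next
  case (insert z T)
  let ?row = "\<lambda>i. if i \<in> T then axis i (d i) + w i *\<^sub>R v else axis i (d i)"
  have "det (\<chi> i. if i = z then v else ?row i) = v$z * (\<Prod>j\<in>UNIV-{z}. d j)"
    using det_diagonal_row_replaced_rank_one[of z T v d w] insert by simp
  then have "det (\<chi> i. if i = z then w z *s v else ?row i) = w z * v$z * (\<Prod>j\<in>UNIV-{z}. d j)"
    using det_row_mul[of z "w z" "\<lambda>i. v" ?row] by simp
  moreover have "(\<chi> i. if i \<in> insert z T then axis i (d i) + w i *\<^sub>R v else axis i (d i))
      = (\<chi> i. if i = z then axis i (d i) + w z *s v else ?row i)"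
    by (auto simp: vec_eq_iff scalar_mult_eq_scaleR)
  moreover have "(\<chi> i. if i = z then axis i (d i) else ?row i) = (\<chi> i. ?row i)"
    using insert by (auto simp: vec_eq_iff)
  ultimately show ?case
    using insert det_row_add[of z "\<lambda>i. axis i (d i)" "\<lambda>i. w z *s v" ?row]
    by (simp add: algebra_simps)
qed

lemma det_diagonal_add_rank_one:
  fixes d w :: "'n::finite \<Rightarrow> real" and v :: "real^'n"
  shows "det (\<chi> i j. (if i = j then d i else 0) + w i * v$j)
      = (\<Prod>i\<in>UNIV. d i) + (\<Sum>i\<in>UNIV. w i * v$i * (\<Prod>j\<in>UNIV-{i}. d j))"
proof -
  have "(\<chi> i j. (if i = j then d i else 0) + w i * v$j) = (\<chi> i. axis i (d i) + w i *\<^sub>R v)"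
    by (auto simp: vec_eq_iff axis_def)
  then show ?thesis using det_diagonal_add_rank_one_rows[of UNIV d w v] by simp
qed

definition bordered_matrix :: "'n::finite \<Rightarrow> real \<Rightarrow> real \<Rightarrow> real \<Rightarrow> real \<Rightarrow> real^'n \<Rightarrow> real^'n^'n" where
  "bordered_matrix k \<alpha> \<beta> \<gamma> \<delta> x = (\<chi> i j.
     if i = k \<and> j = k then \<alpha>
     else if j = k then \<beta> * x$i
     else if i = k then \<beta> * x$j
     else (if i = j then \<gamma> else 0) + \<delta> * x$i * x$j)"

lemma det_bordered_matrix:
  fixes k :: "'n::finite"
  assumes "\<delta> \<noteq> 0" "2 \<le> CARD('n)"
  shows "det (bordered_matrix k \<alpha> \<beta> \<gamma> \<delta> x)
      = \<gamma>^(CARD('n) - 2) * (\<alpha> * \<gamma> + (\<alpha> * \<delta> - \<beta>^2) * xprime_sq k x)"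
proof -
  \<comment> \<open>Eliminating the border turns the matrix into diagonal plus rank one; this needs \<delta> \<noteq> 0.\<close>
  define d where "d i = (if i = k then \<alpha> - \<beta>^2 / \<delta> else \<gamma>)" for i
  define w where "w i = (if i = k then \<beta> / \<delta> else x$i)" for i
  define v :: "real^'n" where "v = (\<chi> j. if j = k then \<beta> else \<delta> * x$j)"
  have M: "bordered_matrix k \<alpha> \<beta> \<gamma> \<delta> x = (\<chi> i j. (if i = j then d i else 0) + w i * v$j)"
    using assms(1) by (auto simp: vec_eq_iff bordered_matrix_def d_def w_def v_def power2_eq_square)
  have card: "CARD('n) - 1 = Suc (CARD('n) - 2)"
    using assms(2) by simp
  have prod_d: "(\<Prod>j\<in>UNIV-{i}. d j) = (if i = k then \<gamma>^(CARD('n) - 1) else d k * \<gamma>^(CARD('n) - 2))" for i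
  proof (cases "i = k")
    case False
    then have "(\<Prod>j\<in>UNIV-{i}. d j) = d k * (\<Prod>j\<in>UNIV-{i}-{k}. \<gamma>)"
      by (subst prod.remove[of _ k]) (auto simp: d_def intro!: prod.cong)
    with False show ?thesis
      by (simp add: card_Diff_singleton numeral_2_eq_2)
  qed (simp add: d_def card_Diff_singleton)
  have prod: "(\<Prod>i\<in>UNIV. d i) = d k * \<gamma>^(CARD('n) - 1)"
    using prod_d[of k] by (simp add: prod.remove[of _ k])
  have sum: "(\<Sum>i\<in>UNIV. w i * v$i * (\<Prod>j\<in>UNIV-{i}. d j))
      = \<beta>^2 / \<delta> * \<gamma>^(CARD('n) - 1) + \<delta> * d k * \<gamma>^(CARD('n) - 2) * xprime_sq k x"
    by (auto simp: sum.remove[of _ k] prod_d w_def v_def xprime_sq_def sum_distrib_left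
        power2_eq_square mult_ac intro!: sum.cong)
  have dk: "d k = (\<alpha> * \<delta> - \<beta>^2) / \<delta>"
    using assms(1) by (simp add: d_def field_simps)
  show ?thesis
    unfolding M det_diagonal_add_rank_one prod sum card dk using assms(1)
    by (simp add: field_simps power2_eq_square)
qed

section \<open>The Hessian of w\<close>

lemma pderiv_dir_eq:
  "(f has_derivative D) (at x) \<Longrightarrow> pderiv_dir f e x = D e"
  unfolding pderiv_dir_def by (simp add: frechet_derivative_at[symmetric])

lemma has_derivative_vec_nth [derivative_intros]:
  "(f has_derivative f') F \<Longrightarrow> ((\<lambda>x. f x $ i) has_derivative (\<lambda>h. f' h $ i)) F"
  using bounded_linear.has_derivative[OF bounded_linear_vec_nth] by blast

lemma axis_component: "axis j c $ i = (if i = j then c else 0)"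
  by (simp add: axis_def)

definition xprime_inner :: "'n::finite \<Rightarrow> real^'n \<Rightarrow> real^'n \<Rightarrow> real" where
  "xprime_inner k x h = (\<Sum>i\<in>UNIV-{k}. x$i * h$i)"

lemma xprime_inner_axis: "xprime_inner k x (axis j 1) = (if j = k then 0 else x$j)"
  unfolding xprime_inner_def by (auto simp: axis_def if_distrib sum.delta' cong: if_cong)

lemma has_derivative_g_fun: "(g_fun k has_derivative (\<lambda>h. - 2 * xprime_inner k x h)) (at x)"
  unfolding g_fun_def[abs_def] xprime_sq_def xprime_inner_def
  by (auto intro!: derivative_eq_intros simp: fun_eq_iff sum_distrib_left sum_negf mult_ac)

lemma has_derivative_phi_fun:
  assumes "0 < x$k" "0 < g_fun k x"
  shows "(phi_fun a b k has_derivative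
      (\<lambda>h. phi_fun a b k x * (a * h$k / x$k - 2 * b * xprime_inner k x h / g_fun k x))) (at x)"
  unfolding phi_fun_def[abs_def]
  using assms by (auto intro!: derivative_eq_intros has_derivative_g_fun simp: fun_eq_iff field_simps)

definition w_partial :: "real \<Rightarrow> real \<Rightarrow> real \<Rightarrow> 'n::finite \<Rightarrow> 'n \<Rightarrow> real^'n \<Rightarrow> real" where
  "w_partial a b C k j x = (if j = k then C - C * a * phi_fun a b k x / x$k
     else 2 * C * b * phi_fun a b k x * x$j / g_fun k x)"

lemma pderiv_dir_w:
  assumes "0 < x$k" "0 < g_fun k x"
  shows "pderiv_dir (\<lambda>x. C * x$k - C * phi_fun a b k x) (axis j 1) x = w_partial a b C k j x"
proof -
  have "((\<lambda>x. C * x$k - C * phi_fun a b k x) has_derivative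
      (\<lambda>h. C * h$k - C * (phi_fun a b k x * (a * h$k / x$k - 2 * b * xprime_inner k x h / g_fun k x)))) (at x)"
    by (auto intro!: derivative_eq_intros has_derivative_phi_fun[OF assms])
  then show ?thesis
    using assms by (auto simp: pderiv_dir_eq w_partial_def xprime_inner_axis axis_component field_simps)
qed

lemma pderiv_dir_w_partial:
  fixes a b C :: real
  assumes pos: "0 < x$k" "0 < g_fun k x"
  defines "\<phi> \<equiv> phi_fun a b k x" and "t \<equiv> x$k" and "g \<equiv> g_fun k x"
  shows "pderiv_dir (w_partial a b C k j) (axis i 1) x =
    bordered_matrix k (C * a * (1 - a) * \<phi> / t^2) (2 * C * a * b * \<phi> / (t * g))
      (2 * C * b * \<phi> / g) (4 * C * b * (1 - b) * \<phi> / g^2) x $ i $ j"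
proof (cases "j = k")
  case True
  have "((\<lambda>x. C - C * a * phi_fun a b k x / x$k) has_derivative
      (\<lambda>h. - (C * a * ((\<phi> * (a * h$k / t - 2 * b * xprime_inner k x h / g)) * t - \<phi> * h$k) / (t * t)))) (at x)"
    using pos unfolding \<phi>_def t_def g_def
    by (auto intro!: derivative_eq_intros has_derivative_phi_fun[OF pos] simp: fun_eq_iff field_simps)
  moreover have "w_partial a b C k j = (\<lambda>x. C - C * a * phi_fun a b k x / x$k)"
    using True by (simp add: w_partial_def fun_eq_iff)
  ultimately show ?thesis
    using pos True unfolding t_def[symmetric] g_def[symmetric]
    by (cases "i = k")
       (simp_all add: pderiv_dir_eq bordered_matrix_def xprime_inner_axis axis_component field_simps power2_eq_square)
next
  case False
  have "((\<lambda>x. 2 * C * b * phi_fun a b k x * x$j / g_fun k x) has_derivative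
      (\<lambda>h. 2 * C * b * (((\<phi> * (a * h$k / t - 2 * b * xprime_inner k x h / g)) * x$j + \<phi> * h$j) / g
          + 2 * \<phi> * x$j * xprime_inner k x h / (g * g)))) (at x)"
    using pos unfolding \<phi>_def t_def g_def
    by (auto intro!: derivative_eq_intros has_derivative_phi_fun[OF pos] has_derivative_g_fun
        simp: fun_eq_iff field_simps)
  moreover have "w_partial a b C k j = (\<lambda>x. 2 * C * b * phi_fun a b k x * x$j / g_fun k x)"
    using False by (simp add: w_partial_def fun_eq_iff)
  ultimately show ?thesis
    using pos False unfolding t_def[symmetric] g_def[symmetric]
    by (cases "i = k"; cases "i = j")
       (simp_all add: pderiv_dir_eq bordered_matrix_def xprime_inner_axis axis_component field_simps power2_eq_square)
qed

lemma hessian_w: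
  fixes a b C :: real
  assumes x: "x \<in> Omega_dom k"
  defines "\<phi> \<equiv> phi_fun a b k x" and "t \<equiv> x$k" and "g \<equiv> g_fun k x"
  shows "hessian (\<lambda>x. C * x$k - C * phi_fun a b k x) x =
    bordered_matrix k (C * a * (1 - a) * \<phi> / t^2) (2 * C * a * b * \<phi> / (t * g))
      (2 * C * b * \<phi> / g) (4 * C * b * (1 - b) * \<phi> / g^2) x"
proof -
  have pos: "0 < y$k" "0 < g_fun k y" if "y \<in> Omega_dom k" for y
    using Omega_domD[OF that] by auto
  have "frechet_derivative (pderiv_dir (\<lambda>x. C * x$k - C * phi_fun a b k x) (axis j 1)) (at x)
      = frechet_derivative (w_partial a b C k j) (at x)" for j
    by (rule frechet_derivative_transform_within_open[OF open_Omega_dom x])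
       (simp add: pderiv_dir_w pos)
  then show ?thesis
    unfolding hessian_def pderiv_dir_def[of "pderiv_dir _ _"]
    using pderiv_dir_w_partial[OF pos[OF x], of a b C]
    by (simp add: vec_eq_iff pderiv_dir_def \<phi>_def t_def g_def)
qed

section \<open>The Monge-Ampere inequality\<close>

lemma phi_fun_gt:
  assumes ab: "0 < a" "0 < b" "a + 2 * b = 1" and x: "x \<in> Omega_dom k"
  shows "x$k < phi_fun a b k x"
proof -
  note pos = Omega_domD[OF x]
  have "x$k = x$k powr a * ((x$k)^2) powr b"
    using pos ab by (simp add: powr_powr flip: powr_add powr_numeral)
  also have "\<dots> < x$k powr a * g_fun k x powr b"
    using pos ab by (intro mult_strict_left_mono powr_less_mono2) auto
  finally show ?thesis by (simp add: phi_fun_def)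
qed

lemma det_hessian_w:
  fixes k :: "'n::finite" and a b C :: real
  assumes "0 < C" "0 < a" "0 < b" "a + 2 * b = 1" "2 \<le> CARD('n)" and x: "x \<in> Omega_dom k"
  shows "det (hessian (\<lambda>x. C * x$k - C * phi_fun a b k x) x)
      = a / (x$k)^2 * (2 * C * b * phi_fun a b k x / g_fun k x) ^ CARD('n)"
proof -
  define \<phi> t g where "\<phi> = phi_fun a b k x" and "t = x$k" and "g = g_fun k x"
  define \<gamma> where "\<gamma> = 2 * C * b * \<phi> / g"
  have pos: "0 < t" "0 < g" "0 < \<phi>"
    using Omega_domD[OF x] phi_fun_gt[OF assms(2-4) x] unfolding t_def g_def \<phi>_def by auto
  have "xprime_sq k x = 1 - g" by (simp add: g_def g_fun_def)
  \<comment> \<open>With a + 2b = 1 the bracket collapses because g + |x'|^2 = 1.\<close>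
  then have bracket: "C * a * (1 - a) * \<phi> / t^2 * \<gamma>
      + (C * a * (1 - a) * \<phi> / t^2 * (4 * C * b * (1 - b) * \<phi> / g^2) - (2 * C * a * b * \<phi> / (t * g))^2)
        * xprime_sq k x
      = a / t^2 * \<gamma>^2"
    using pos assms(4) by (simp add: \<gamma>_def field_simps power2_eq_square) algebra
  have "4 * C * b * (1 - b) * \<phi> / g^2 \<noteq> 0"
    using pos assms(1-4) by auto
  then have "det (hessian (\<lambda>x. C * x$k - C * phi_fun a b k x) x)
      = \<gamma>^(CARD('n) - 2) * (C * a * (1 - a) * \<phi> / t^2 * \<gamma>
      + (C * a * (1 - a) * \<phi> / t^2 * (4 * C * b * (1 - b) * \<phi> / g^2) - (2 * C * a * b * \<phi> / (t * g))^2)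
        * xprime_sq k x)"
    unfolding hessian_w[OF x] \<gamma>_def \<phi>_def t_def g_def by (rule det_bordered_matrix[OF _ assms(5)])
  also have "\<dots> = \<gamma>^(CARD('n) - 2) * (a / t^2 * \<gamma>^2)"
    by (simp only: bracket)
  also have "\<dots> = a / t^2 * \<gamma>^CARD('n)"
    using assms(5) by (metis le_add_diff_inverse2 mult.commute mult.left_commute power_add)
  finally show ?thesis by (simp add: \<gamma>_def \<phi>_def t_def g_def)
qed

lemma scaled_cobb_douglas_powr_le:
  fixes t g C a b s :: real and n :: nat
  assumes "0 < t" "0 < g" "g \<le> 1" "0 < C" "C \<le> 1"
    and "a * s = 2" "a + 2 * b = 1" "2 * real n + 2 \<le> s"
  shows "(C * (t powr a * g powr b)) powr s \<le> t^2 * g^n"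
proof -
  have "(C * (t powr a * g powr b)) powr s = C powr s * (t^2 * g powr (b * s))"
    using assms by (simp add: powr_mult powr_powr mult.commute[of _ s] flip: powr_numeral)
  also have "\<dots> \<le> 1 * (t^2 * g powr real n)"
  proof (intro mult_mono mult_left_mono)
    show "C powr s \<le> 1" using assms by (intro powr_le1) auto
    have "(a + 2 * b) * s = s" using assms(7) by simp
    then have "b * s = (s - a * s) / 2" by (simp add: algebra_simps)
    then show "g powr (b * s) \<le> g powr real n"
      using assms by (intro powr_mono') auto
  qed (use assms in auto)
  finally show ?thesis using assms(2) by (simp add: powr_realpow)
qed

lemma det_hessian_w_fun_le:
  fixes k :: "'n::finite"
  assumes "0 < C" "C \<le> 1" "2 \<le> CARD('n)" "real CARD('n) + 2 \<le> p" and x: "x \<in> Omega_dom k"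
  shows "det (hessian (w_fun C p k) x) \<le> \<bar>w_fun C p k x\<bar> powr - p"
proof -
  have "2 \<le> real CARD('n)" using assms(3) by simp
  then have "2 < real CARD('n) + p" using assms(4) by linarith
  then obtain a b where ab: "0 < a" "0 < b" "a + 2 * b = 1" "a * (real CARD('n) + p) = 2"
    and w: "w_fun C p k = (\<lambda>x. C * x$k - C * phi_fun a b k x)"
    using w_fun_exponents by blast
  define \<phi> t g where "\<phi> = phi_fun a b k x" and "t = x$k" and "g = g_fun k x"
  have pos: "0 < t" "0 < g" "g \<le> 1" "t < \<phi>"
    using Omega_domD[OF x] phi_fun_gt[OF ab(1-3) x] xprime_sq_nonneg[of k x]
    unfolding t_def g_def \<phi>_def by (auto simp: g_fun_def)
  have "det (hessian (w_fun C p k) x) = a / t^2 * (2 * C * b * \<phi> / g) ^ CARD('n)"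
    unfolding w det_hessian_w[OF assms(1) ab(1-3) assms(3) x] \<phi>_def t_def g_def ..
  also have "\<dots> \<le> 1 / t^2 * (C * \<phi> / g) ^ CARD('n)"
    using ab pos assms(1) by (intro mult_mono power_mono divide_right_mono) auto
  also have "\<dots> \<le> (C * \<phi>) powr - p"
  proof -
    have c: "0 < C * \<phi>" using pos assms(1) by simp
    have "(C * \<phi>) ^ CARD('n) * (C * \<phi>) powr p = (C * \<phi>) powr (real CARD('n) + p)"
      using c by (simp add: powr_add powr_realpow)
    also have "\<dots> \<le> t^2 * g ^ CARD('n)"
      unfolding \<phi>_def phi_fun_def t_def[symmetric] g_def[symmetric]
      using assms(4) by (intro scaled_cobb_douglas_powr_le pos assms(1,2) ab(3,4)) simp
    finally have "(C * \<phi>) ^ CARD('n) * (C * \<phi>) powr p \<le> t^2 * g ^ CARD('n)" .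
    moreover have "0 < (C * \<phi>) powr p" using pos assms(1) by simp
    ultimately show ?thesis
      using pos c by (simp add: powr_minus_divide power_divide field_simps pos_le_divide_eq mult_ac)
  qed
  also have "\<dots> \<le> (C * \<phi> - C * t) powr - p"
    using pos assms by (intro powr_mono2') (auto simp: algebra_simps)
  also have "\<dots> = \<bar>w_fun C p k x\<bar> powr - p"
    using pos assms(1) by (simp add: w \<phi>_def t_def abs_if algebra_simps)
  finally show ?thesis .
qed

theorem lemma2p7:
  fixes k :: "'n::finite" and p :: real
  assumes "CARD('n) \<ge> 2" and "p \<ge> real CARD('n) + 2"
  shows "\<exists>C>0.
           smooth_on (Omega_dom k) (w_fun C p k)
         \<and> convex_on (Omega_dom k) (w_fun C p k)
         \<and> (\<forall>x\<in>Omega_dom k. det (hessian (w_fun C p k) x) \<le> \<bar>w_fun C p k x\<bar> powr (- p))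
         \<and> (\<forall>x\<in>frontier (Omega_dom k). w_fun C p k x = 0)"
proof (intro exI[of _ 1] conjI ballI)
  have "2 \<le> real CARD('n)" using assms(1) by simp
  then have exps: "2 < real CARD('n) + p" using assms(2) by linarith
  show "(0::real) < 1" by simp
  show "smooth_on (Omega_dom k) (w_fun 1 p k)"
    by (rule smooth_on_w_fun)
  show "convex_on (Omega_dom k) (w_fun 1 p k)"
    using exps by (simp add: convex_on_w_fun)
  show "det (hessian (w_fun 1 p k) x) \<le> \<bar>w_fun 1 p k x\<bar> powr (- p)" if "x \<in> Omega_dom k" for x
    using assms that by (simp add: det_hessian_w_fun_le)
  show "w_fun 1 p k x = 0" if "x \<in> frontier (Omega_dom k)" for x
    using exps that by (rule w_fun_frontier)
qed

end
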